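(* Let $n\ge 1$, $c\ge 2$, $d\ge 2$ be integers, and let $f:\mathbb{Z}_c^n\to\mathbb{Z}_d$ be a function that is not an $n$-partite linear function. Let $\pi$ be a probability distribution on $\mathbb{Z}_c^n$ with $\pi(\mathbf{s})>0$ for every $\mathbf{s}$, and put $$\bar p^{\mathcal{L}}_{f}=\max_{g}\sum_{\mathbf{s}}\pi(\mathbf{s})\,\delta^{f(\mathbf{s})}_{g(\mathbf{s})},$$ the maximum being over all $n$-partite linear functions $g:\mathbb{Z}_c^n\to\mathbb{Z}_d$. Consider the inequality $$\sum_{\mathbf{s}}\pi(\mathbf{s})\sum_{k=1}^{d-1}\Big(\delta^{k}_{f(\mathbf{s})}-\delta^{0}_{f(\mathbf{s})}\Big)p(k|\mathbf{s})\;\le\;\bar p^{\mathcal{L}}_{f}-\sum_{\mathbf{s}}\pi(\mathbf{s})\,\delta^{0}_{f(\mathbf{s})}. \qquad (\ast)$$ Then $(\ast)$ is a non-trivial Bell inequality: it is satisfied by every LHV correlator, and its right-hand side is strictly smaller than the maximum of its left-hand side over all correlators in $\mathcal{P}$.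
   Context: Bell scenario $(n,c,d)$: $n$ space-like separated parties; party $j$ receives an input $s_j\in\mathbb{Z}_c$ and produces an output $m_j\in\mathbb{Z}_d$; $\mathbf{s}=(s_1,\dots,s_n)$, $\mathbf{m}=(m_1,\dots,m_n)$. A conditional distribution $p(\mathbf{m}|\mathbf{s})$ is LHV (local hidden variable) if $p(\mathbf{m}|\mathbf{s})=\int p(\lambda)d\lambda\prod_{j=1}^n p(m_j|s_j,\lambda)$ for some probability measure on a hidden variable space and local conditional distributions. Its correlator is $p(k|\mathbf{s})=\sum_{\mathbf{m}}\delta^{[\sum_j m_j]_d}_{k}\,p(\mathbf{m}|\mathbf{s})$ for $k\in\mathbb{Z}_d$, where $[\cdot]_d$ denotes reduction mod $d$; LHV correlators are correlators of LHV distributions. $\mathcal{P}$ is the set of all correlator families, i.e. the convex hull of the deterministic correlators $p(k|\mathbf{s})=\delta^k_{F(\mathbf{s})}$ over all functions $F:\mathbb{Z}_c^n\to\mathbb{Z}_d$ (equivalently, all families with $p(\cdot|\mathbf{s})$ a probability distribution on $\mathbb{Z}_d$ for each $\mathbf{s}$). A function $g:\mathbb{Z}_c^n\to\mathbb{Z}_d$ is $n$-partite linear if $g(\mathbf{s})=[\sum_{j=1}^n g_j(s_j)]_d$ for some single-site maps $g_j:\mathbb{Z}_c\to\mathbb{Z}_d$. $\delta$ denotes the Kronecker delta. *)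

theory Defs
  imports "HOL-Probability.Probability"
begin

text \<open>Tuples in Z_q^n are represented as lists of naturals of length n with entries below q.\<close>
definition tuples :: "nat \<Rightarrow> nat \<Rightarrow> nat list set" where
  "tuples n q = {xs. length xs = n \<and> (\<forall>x\<in>set xs. x < q)}"

text \<open>Local hidden variable model: probability measure M on the hidden variable space and
  local response functions P j a b lam = p(m_j = b | s_j = a, lam) for party j.\<close>
definition lhv_model :: "'h measure \<Rightarrow> (nat \<Rightarrow> nat \<Rightarrow> nat \<Rightarrow> 'h \<Rightarrow> real) \<Rightarrow> nat \<Rightarrow> nat \<Rightarrow> nat \<Rightarrow> bool" where
  "lhv_model M P n c d \<longleftrightarrow> prob_space M \<and>
     (\<forall>j a b. P j a b \<in> borel_measurable M) \<and>
     (\<forall>j<n. \<forall>a<c. \<forall>b<d. \<forall>lam\<in>space M. 0 \<le> P j a b lam) \<and>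
     (\<forall>j<n. \<forall>a<c. \<forall>lam\<in>space M. (\<Sum>b<d. P j a b lam) = 1)"

definition lhv_dist :: "'h measure \<Rightarrow> (nat \<Rightarrow> nat \<Rightarrow> nat \<Rightarrow> 'h \<Rightarrow> real) \<Rightarrow> nat \<Rightarrow> nat list \<Rightarrow> nat list \<Rightarrow> real" where
  "lhv_dist M P n s m = (\<integral>lam. (\<Prod>j<n. P j (s ! j) (m ! j) lam) \<partial>M)"

definition correlator :: "nat \<Rightarrow> nat \<Rightarrow> (nat list \<Rightarrow> nat list \<Rightarrow> real) \<Rightarrow> nat list \<Rightarrow> nat \<Rightarrow> real" where
  "correlator n d p s k = (\<Sum>m\<in>tuples n d. (if sum_list m mod d = k then 1 else 0) * p s m)"

definition corr_families :: "nat \<Rightarrow> nat \<Rightarrow> nat \<Rightarrow> (nat list \<Rightarrow> nat \<Rightarrow> real) set" where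
  "corr_families n c d = {q. (\<forall>s\<in>tuples n c. (\<forall>k<d. 0 \<le> q s k) \<and> (\<Sum>k<d. q s k) = 1)}"

definition npartite_linear :: "nat \<Rightarrow> nat \<Rightarrow> nat \<Rightarrow> (nat list \<Rightarrow> nat) \<Rightarrow> bool" where
  "npartite_linear n c d g \<longleftrightarrow>
     (\<exists>gs :: nat \<Rightarrow> nat \<Rightarrow> nat. (\<forall>j<n. \<forall>a<c. gs j a < d) \<and>
        (\<forall>s\<in>tuples n c. g s = (\<Sum>j<n. gs j (s ! j)) mod d))"

definition kdelta :: "nat \<Rightarrow> nat \<Rightarrow> real" where
  "kdelta a b = (if a = b then 1 else 0)"

definition bell_lhs :: "nat \<Rightarrow> nat \<Rightarrow> nat \<Rightarrow> (nat list \<Rightarrow> real) \<Rightarrow> (nat list \<Rightarrow> nat) \<Rightarrow> (nat list \<Rightarrow> nat \<Rightarrow> real) \<Rightarrow> real" where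
  "bell_lhs n c d \<pi> f q = (\<Sum>s\<in>tuples n c. \<pi> s * (\<Sum>k\<in>{1..d-1}. (kdelta k (f s) - kdelta 0 (f s)) * q s k))"

definition pbar_lin :: "nat \<Rightarrow> nat \<Rightarrow> nat \<Rightarrow> (nat list \<Rightarrow> real) \<Rightarrow> (nat list \<Rightarrow> nat) \<Rightarrow> real" where
  "pbar_lin n c d \<pi> f = Max {(\<Sum>s\<in>tuples n c. \<pi> s * kdelta (f s) (g s)) | g. npartite_linear n c d g}"

definition bell_rhs :: "nat \<Rightarrow> nat \<Rightarrow> nat \<Rightarrow> (nat list \<Rightarrow> real) \<Rightarrow> (nat list \<Rightarrow> nat) \<Rightarrow> real" where
  "bell_rhs n c d \<pi> f = pbar_lin n c d \<pi> f - (\<Sum>s\<in>tuples n c. \<pi> s * kdelta 0 (f s))"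

end

theory Submission
  imports Defs
begin

text \<open>For a normalised correlator the left-hand side is the success probability
  \<open>\<Sum>s. \<pi> s * p (f s | s)\<close> of outputting \<open>f s\<close>, minus a constant. For a fixed hidden
  variable an LHV model is a product of local response distributions; derandomising one party at a
  time shows that it does no better than a deterministic strategy \<open>m\<^sub>j = h\<^sub>j (s\<^sub>j)\<close>, whose
  output \<open>(\<Sum>j. h\<^sub>j (s\<^sub>j)) mod d\<close> is n-partite linear. Averaging over the hidden variable bounds
  the success probability by the linear optimum, which is below 1 because f is not linear and
  \<pi> has full support, while the deterministic correlator \<open>\<delta>(k, f s)\<close> succeeds with probability 1.\<close>

lemma tuples_0: "tuples 0 c = {[]}"
  by (auto simp: tuples_def)

lemma tuples_Suc: "tuples (Suc n) c = (\<lambda>(a, s). a # s) ` ({..<c} \<times> tuples n c)"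
proof
  show "tuples (Suc n) c \<subseteq> (\<lambda>(a, s). a # s) ` ({..<c} \<times> tuples n c)"
  proof
    fix xs assume "xs \<in> tuples (Suc n) c"
    then obtain a s where "xs = a # s" "a < c" "s \<in> tuples n c"
      by (auto simp: tuples_def length_Suc_conv)
    then show "xs \<in> (\<lambda>(a, s). a # s) ` ({..<c} \<times> tuples n c)"
      by force
  qed
qed (auto simp: tuples_def)

lemma finite_tuples: "finite (tuples n c)"
  by (induction n) (auto simp: tuples_0 tuples_Suc)

lemma sum_tuples_Suc:
  "(\<Sum>s\<in>tuples (Suc n) c. g s) = (\<Sum>a<c. \<Sum>s\<in>tuples n c. g (a # s))"
proof -
  have "(\<Sum>s\<in>tuples (Suc n) c. g s) = (\<Sum>(a, s)\<in>{..<c} \<times> tuples n c. g (a # s))"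
    unfolding tuples_Suc by (subst sum.reindex) (auto simp: inj_on_def split_def)
  also have "\<dots> = (\<Sum>a<c. \<Sum>s\<in>tuples n c. g (a # s))"
    by (simp add: sum.cartesian_product split_def)
  finally show ?thesis .
qed

lemma sum_tuples_prod:
  "(\<Sum>m\<in>tuples n d. \<Prod>j<n. x j (m ! j)) = (\<Prod>j<n. \<Sum>b<d. x j b :: 'a :: comm_semiring_1)"
proof (induction n arbitrary: x)
  case 0
  then show ?case by (simp add: tuples_0)
next
  case (Suc n)
  have "(\<Sum>m\<in>tuples (Suc n) d. \<Prod>j<Suc n. x j (m ! j))
      = (\<Sum>b<d. x 0 b * (\<Sum>m\<in>tuples n d. \<Prod>j<n. x (Suc j) (m ! j)))"
    by (simp del: prod.lessThan_Suc add: sum_tuples_Suc prod.lessThan_Suc_shift sum_distrib_left)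
  also have "\<dots> = (\<Prod>j<Suc n. \<Sum>b<d. x j b)"
    using Suc.IH[of "\<lambda>j. x (Suc j)"]
    by (simp del: prod.lessThan_Suc add: prod.lessThan_Suc_shift sum_distrib_right)
  finally show ?case .
qed

lemma sum_tuples_weighted_Suc:
  fixes V :: "nat list \<Rightarrow> nat list \<Rightarrow> 'a :: comm_semiring_1"
  shows "(\<Sum>s\<in>tuples (Suc n) c. \<Sum>m\<in>tuples (Suc n) d. V s m * (\<Prod>j<Suc n. p j (s ! j) (m ! j)))
   = (\<Sum>s\<in>tuples n c. \<Sum>m\<in>tuples n d.
        (\<Sum>a<c. \<Sum>b<d. p 0 a b * V (a # s) (b # m)) * (\<Prod>j<n. p (Suc j) (s ! j) (m ! j)))"
  (is "?lhs = ?rhs")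
proof -
  let ?w = "\<lambda>s m. \<Prod>j<n. p (Suc j) (s ! j) (m ! j)"
  have "?lhs = (\<Sum>a<c. \<Sum>s\<in>tuples n c. \<Sum>b<d. \<Sum>m\<in>tuples n d. p 0 a b * V (a # s) (b # m) * ?w s m)"
    by (simp del: prod.lessThan_Suc add: sum_tuples_Suc prod.lessThan_Suc_shift mult_ac)
  also have "\<dots> = (\<Sum>s\<in>tuples n c. \<Sum>a<c. \<Sum>b<d. \<Sum>m\<in>tuples n d. p 0 a b * V (a # s) (b # m) * ?w s m)"
    by (rule sum.swap)
  also have "\<dots> = (\<Sum>s\<in>tuples n c. \<Sum>a<c. \<Sum>m\<in>tuples n d. \<Sum>b<d. p 0 a b * V (a # s) (b # m) * ?w s m)"
    by (intro sum.cong refl sum.swap)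
  also have "\<dots> = (\<Sum>s\<in>tuples n c. \<Sum>m\<in>tuples n d. \<Sum>a<c. \<Sum>b<d. p 0 a b * V (a # s) (b # m) * ?w s m)"
    by (intro sum.cong refl sum.swap)
  also have "\<dots> = ?rhs"
    by (simp add: sum_distrib_right)
  finally show ?thesis .
qed

lemma convex_combination_le_some_term:
  fixes p x :: "'b \<Rightarrow> real"
  assumes "finite A" and "\<forall>b\<in>A. 0 \<le> p b" and "sum p A = 1"
  obtains b where "b \<in> A" and "(\<Sum>b'\<in>A. p b' * x b') \<le> x b"
proof -
  have "A \<noteq> {}" using assms(3) by auto
  then have "Max (x ` A) \<in> x ` A" using assms(1) by simp
  then obtain b where b: "b \<in> A" "x b = Max (x ` A)" by auto
  have "(\<Sum>b'\<in>A. p b' * x b') \<le> (\<Sum>b'\<in>A. p b' * x b)"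
    using assms(1,2) b by (intro sum_mono mult_left_mono) auto
  also have "\<dots> = x b"
    using assms(3) by (simp add: sum_distrib_right[symmetric])
  finally show ?thesis using b(1) that by blast
qed

definition local_outputs :: "(nat \<Rightarrow> nat \<Rightarrow> nat) \<Rightarrow> nat \<Rightarrow> nat list \<Rightarrow> nat list" where
  "local_outputs h n s = map (\<lambda>j. h j (s ! j)) [0..<n]"

lemma local_outputs_Suc:
  "local_outputs h (Suc n) (a # s) = h 0 a # local_outputs (\<lambda>j. h (Suc j)) n s"
  unfolding local_outputs_def map_upt_Suc by simp

lemma sum_list_local_outputs: "sum_list (local_outputs h n s) = (\<Sum>j<n. h j (s ! j))"
  by (simp add: local_outputs_def sum_set_upt_conv_sum_list_nat[symmetric] atLeast0LessThan)

text \<open>Induction on the parties: once parties \<open>1..n\<close> play deterministically, the objective is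
  linear in the response distribution of party 0 at each input, so a point mass does at least as well.\<close>
lemma product_strategy_le_deterministic:
  fixes V :: "nat list \<Rightarrow> nat list \<Rightarrow> real"
  assumes "\<forall>j<n. \<forall>a<c. \<forall>b<d. 0 \<le> p j a b"
    and "\<forall>j<n. \<forall>a<c. (\<Sum>b<d. p j a b) = 1"
  shows "\<exists>h. (\<forall>j<n. \<forall>a<c. h j a < d) \<and>
    (\<Sum>s\<in>tuples n c. \<Sum>m\<in>tuples n d. V s m * (\<Prod>j<n. p j (s ! j) (m ! j)))
      \<le> (\<Sum>s\<in>tuples n c. V s (local_outputs h n s))"
  using assms
proof (induction n arbitrary: V p)
  case 0
  then show ?case by (simp add: tuples_0 local_outputs_def)
next
  case (Suc n)
  define V' where "V' s m = (\<Sum>a<c. \<Sum>b<d. p 0 a b * V (a # s) (b # m))" for s m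
  obtain h' where h': "\<forall>j<n. \<forall>a<c. h' j a < d"
    and IH: "(\<Sum>s\<in>tuples n c. \<Sum>m\<in>tuples n d. V' s m * (\<Prod>j<n. p (Suc j) (s ! j) (m ! j)))
      \<le> (\<Sum>s\<in>tuples n c. V' s (local_outputs h' n s))"
    using Suc.IH[of "\<lambda>j. p (Suc j)" V'] Suc.prems by auto
  define B where "B a b = (\<Sum>s\<in>tuples n c. V (a # s) (b # local_outputs h' n s))" for a b
  have "\<forall>a<c. \<exists>b<d. (\<Sum>b'<d. p 0 a b' * B a b') \<le> B a b"
  proof (intro allI impI)
    fix a assume "a < c"
    moreover have "\<forall>b\<in>{..<d}. 0 \<le> p 0 a b" "sum (p 0 a) {..<d} = 1"
      using \<open>a < c\<close> Suc.prems by auto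
    ultimately obtain b where "b \<in> {..<d}" "(\<Sum>b'<d. p 0 a b' * B a b') \<le> B a b"
      by (metis convex_combination_le_some_term finite_lessThan)
    then show "\<exists>b<d. (\<Sum>b'<d. p 0 a b' * B a b') \<le> B a b" by auto
  qed
  then obtain bs where bs: "\<forall>a<c. bs a < d \<and> (\<Sum>b'<d. p 0 a b' * B a b') \<le> B a (bs a)"
    by metis
  define h where "h = (\<lambda>j. case j of 0 \<Rightarrow> bs | Suc j' \<Rightarrow> h' j')"
  have "(\<Sum>s\<in>tuples (Suc n) c. \<Sum>m\<in>tuples (Suc n) d. V s m * (\<Prod>j<Suc n. p j (s ! j) (m ! j)))
      \<le> (\<Sum>s\<in>tuples n c. V' s (local_outputs h' n s))"
    using IH unfolding sum_tuples_weighted_Suc V'_def .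
  also have "\<dots> = (\<Sum>a<c. \<Sum>s\<in>tuples n c. \<Sum>b<d. p 0 a b * V (a # s) (b # local_outputs h' n s))"
    unfolding V'_def by (rule sum.swap)
  also have "\<dots> = (\<Sum>a<c. \<Sum>b<d. p 0 a b * B a b)"
    unfolding B_def sum_distrib_left by (intro sum.cong refl sum.swap)
  also have "\<dots> \<le> (\<Sum>a<c. B a (bs a))"
    using bs by (intro sum_mono) auto
  also have "\<dots> = (\<Sum>s\<in>tuples (Suc n) c. V s (local_outputs h (Suc n) s))"
    by (simp add: sum_tuples_Suc local_outputs_Suc B_def h_def)
  finally have "(\<Sum>s\<in>tuples (Suc n) c. \<Sum>m\<in>tuples (Suc n) d. V s m * (\<Prod>j<Suc n. p j (s ! j) (m ! j)))
      \<le> (\<Sum>s\<in>tuples (Suc n) c. V s (local_outputs h (Suc n) s))" .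
  moreover have "\<forall>j<Suc n. \<forall>a<c. h j a < d"
    using h' bs by (auto simp: h_def split: nat.split)
  ultimately show ?case by blast
qed

lemma npartite_linear_local_outputs:
  assumes "\<forall>j<n. \<forall>a<c. h j a < d"
  shows "npartite_linear n c d (\<lambda>s. sum_list (local_outputs h n s) mod d)"
  unfolding npartite_linear_def sum_list_local_outputs using assms by blast

lemma finite_linear_agreements:
  "finite {(\<Sum>s\<in>tuples n c. \<pi> s * kdelta (f s) (g s)) | g. npartite_linear n c d g}"
proof (rule finite_subset)
  show "{(\<Sum>s\<in>tuples n c. \<pi> s * kdelta (f s) (g s)) | g. npartite_linear n c d g}
      \<subseteq> sum \<pi> ` Pow (tuples n c)"
  proof
    fix x assume "x \<in> {(\<Sum>s\<in>tuples n c. \<pi> s * kdelta (f s) (g s)) | g. npartite_linear n c d g}"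
    then obtain g where x: "x = (\<Sum>s\<in>tuples n c. \<pi> s * kdelta (f s) (g s))" by auto
    have "x = sum \<pi> {s \<in> tuples n c. f s = g s}"
      unfolding x using finite_tuples
      by (simp add: sum.inter_filter kdelta_def if_distrib cong: if_cong)
    then show "x \<in> sum \<pi> ` Pow (tuples n c)" by auto
  qed
qed (simp add: finite_tuples)

lemma pbar_lin_ge:
  "npartite_linear n c d g \<Longrightarrow> (\<Sum>s\<in>tuples n c. \<pi> s * kdelta (f s) (g s)) \<le> pbar_lin n c d \<pi> f"
  unfolding pbar_lin_def by (intro Max_ge finite_linear_agreements) blast

lemma pbar_lin_attained:
  assumes "d > 0"
  obtains g where "npartite_linear n c d g"
    and "pbar_lin n c d \<pi> f = (\<Sum>s\<in>tuples n c. \<pi> s * kdelta (f s) (g s))"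
proof -
  have "npartite_linear n c d (\<lambda>_. 0)"
    unfolding npartite_linear_def using assms by (intro exI[of _ "\<lambda>_ _. 0"]) auto
  then have "pbar_lin n c d \<pi> f
      \<in> {(\<Sum>s\<in>tuples n c. \<pi> s * kdelta (f s) (g s)) | g. npartite_linear n c d g}"
    unfolding pbar_lin_def by (intro Max_in finite_linear_agreements) blast
  then show ?thesis using that by blast
qed

lemma pbar_lin_less_1:
  assumes "d > 0" and "\<not> npartite_linear n c d f"
    and "\<forall>s\<in>tuples n c. \<pi> s > 0" and "(\<Sum>s\<in>tuples n c. \<pi> s) = 1"
  shows "pbar_lin n c d \<pi> f < 1"
proof -
  obtain g where g: "npartite_linear n c d g"
    and pbar: "pbar_lin n c d \<pi> f = (\<Sum>s\<in>tuples n c. \<pi> s * kdelta (f s) (g s))"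
    using pbar_lin_attained[OF assms(1)] .
  have "\<exists>s\<in>tuples n c. f s \<noteq> g s"
  proof (rule ccontr)
    assume "\<not> (\<exists>s\<in>tuples n c. f s \<noteq> g s)"
    then have "npartite_linear n c d f"
      using g unfolding npartite_linear_def by auto
    with assms(2) show False ..
  qed
  then have "(\<Sum>s\<in>tuples n c. \<pi> s * kdelta (f s) (g s)) < (\<Sum>s\<in>tuples n c. \<pi> s)"
    using assms(3) finite_tuples
    by (intro sum_strict_mono_ex1) (auto simp: kdelta_def less_imp_le)
  then show ?thesis using pbar assms(4) by simp
qed

lemma product_strategy_success_le_pbar_lin:
  fixes p :: "nat \<Rightarrow> nat \<Rightarrow> nat \<Rightarrow> real"
  assumes "\<forall>j<n. \<forall>a<c. \<forall>b<d. 0 \<le> p j a b"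
    and "\<forall>j<n. \<forall>a<c. (\<Sum>b<d. p j a b) = 1"
  shows "(\<Sum>s\<in>tuples n c. \<Sum>m\<in>tuples n d.
            \<pi> s * (if sum_list m mod d = f s then 1 else 0) * (\<Prod>j<n. p j (s ! j) (m ! j)))
         \<le> pbar_lin n c d \<pi> f"
proof -
  obtain h where h: "\<forall>j<n. \<forall>a<c. h j a < d"
    and le: "(\<Sum>s\<in>tuples n c. \<Sum>m\<in>tuples n d.
            \<pi> s * (if sum_list m mod d = f s then 1 else 0) * (\<Prod>j<n. p j (s ! j) (m ! j)))
      \<le> (\<Sum>s\<in>tuples n c. \<pi> s * (if sum_list (local_outputs h n s) mod d = f s then 1 else 0))"
    using product_strategy_le_deterministic[OF assms,
        of "\<lambda>s m. \<pi> s * (if sum_list m mod d = f s then 1 else 0)"]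
    by blast
  note le
  also have "(\<Sum>s\<in>tuples n c. \<pi> s * (if sum_list (local_outputs h n s) mod d = f s then 1 else 0))
      = (\<Sum>s\<in>tuples n c. \<pi> s * kdelta (f s) (sum_list (local_outputs h n s) mod d))"
    by (intro sum.cong refl) (auto simp: kdelta_def)
  also have "\<dots> \<le> pbar_lin n c d \<pi> f"
    using npartite_linear_local_outputs[OF h] by (rule pbar_lin_ge)
  finally show ?thesis .
qed

lemma sum_correlator:
  assumes "d > 0"
  shows "(\<Sum>k<d. correlator n d p s k) = (\<Sum>m\<in>tuples n d. p s m)"
proof -
  have "(\<Sum>k<d. correlator n d p s k)
      = (\<Sum>m\<in>tuples n d. \<Sum>k<d. (if sum_list m mod d = k then 1 else 0) * p s m)"
    unfolding correlator_def by (rule sum.swap)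
  also have "\<dots> = (\<Sum>m\<in>tuples n d. p s m)"
  proof (intro sum.cong refl)
    fix m
    have "(\<Sum>k<d. (if sum_list m mod d = k then 1 else 0) * p s m)
        = (\<Sum>k<d. if k = sum_list m mod d then p s m else 0)"
      by (intro sum.cong) auto
    then show "(\<Sum>k<d. (if sum_list m mod d = k then 1 else 0) * p s m) = p s m"
      using assms by simp
  qed
  finally show ?thesis .
qed

lemma lhv_response_le_1:
  assumes "lhv_model M P n c d" and "j < n" "a < c" "b < d" "lam \<in> space M"
  shows "P j a b lam \<le> 1"
proof -
  have "P j a b lam \<le> (\<Sum>b'<d. P j a b' lam)"
    using assms by (intro member_le_sum) (auto simp: lhv_model_def)
  then show ?thesis
    using assms by (simp add: lhv_model_def)
qed

lemma integrable_lhv_response_prod: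
  assumes "lhv_model M P n c d" and "s \<in> tuples n c" "m \<in> tuples n d"
  shows "integrable M (\<lambda>lam. \<Prod>j<n. P j (s ! j) (m ! j) lam)"
proof -
  interpret prob_space M
    using assms(1) by (simp add: lhv_model_def)
  have inputs: "\<And>j. j < n \<Longrightarrow> s ! j < c \<and> m ! j < d"
    using assms(2,3) by (auto simp: tuples_def)
  have "AE lam in M. norm (\<Prod>j<n. P j (s ! j) (m ! j) lam) \<le> 1"
  proof (rule AE_I2)
    fix lam assume "lam \<in> space M"
    then have "0 \<le> P j (s ! j) (m ! j) lam \<and> P j (s ! j) (m ! j) lam \<le> 1" if "j < n" for j
      using that inputs[OF that] lhv_response_le_1[OF assms(1)] assms(1)
      by (auto simp: lhv_model_def)
    then have "0 \<le> (\<Prod>j<n. P j (s ! j) (m ! j) lam)" "(\<Prod>j<n. P j (s ! j) (m ! j) lam) \<le> 1"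
      by (auto intro: prod_nonneg prod_le_1)
    then show "norm (\<Prod>j<n. P j (s ! j) (m ! j) lam) \<le> 1"
      by simp
  qed
  moreover have "(\<lambda>lam. \<Prod>j<n. P j (s ! j) (m ! j) lam) \<in> borel_measurable M"
    using assms(1) by (intro borel_measurable_prod) (simp add: lhv_model_def)
  ultimately show ?thesis
    by (rule integrable_const_bound)
qed

lemma sum_lhv_dist:
  assumes "lhv_model M P n c d" and "s \<in> tuples n c"
  shows "(\<Sum>m\<in>tuples n d. lhv_dist M P n s m) = 1"
proof -
  interpret prob_space M
    using assms(1) by (simp add: lhv_model_def)
  have "(\<Sum>m\<in>tuples n d. lhv_dist M P n s m)
      = (\<integral>lam. (\<Sum>m\<in>tuples n d. \<Prod>j<n. P j (s ! j) (m ! j) lam) \<partial>M)"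
    unfolding lhv_dist_def using integrable_lhv_response_prod[OF assms]
    by (intro Bochner_Integration.integral_sum[symmetric]) auto
  also have "\<dots> = (\<integral>lam. 1 \<partial>M)"
  proof (rule Bochner_Integration.integral_cong[OF refl])
    fix lam assume "lam \<in> space M"
    have "(\<Sum>m\<in>tuples n d. \<Prod>j<n. P j (s ! j) (m ! j) lam) = (\<Prod>j<n. \<Sum>b<d. P j (s ! j) b lam)"
      by (rule sum_tuples_prod)
    also have "\<dots> = 1"
      using assms \<open>lam \<in> space M\<close> by (intro prod.neutral) (auto simp: lhv_model_def tuples_def)
    finally show "(\<Sum>m\<in>tuples n d. \<Prod>j<n. P j (s ! j) (m ! j) lam) = 1" .
  qed
  finally show ?thesis by (simp add: prob_space)
qed

text \<open>An LHV correlator is the average over the hidden variable of product strategies, each of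
  which does no better than a deterministic one.\<close>
lemma lhv_success_le_pbar_lin:
  assumes "lhv_model M P n c d"
  shows "(\<Sum>s\<in>tuples n c. \<pi> s * correlator n d (lhv_dist M P n) s (f s)) \<le> pbar_lin n c d \<pi> f"
proof -
  interpret prob_space M
    using assms by (simp add: lhv_model_def)
  define W where "W s m lam =
    \<pi> s * (if sum_list m mod d = f s then 1 else 0) * (\<Prod>j<n. P j (s ! j) (m ! j) lam)" for s m lam
  have integrable: "integrable M (W s m)" if "s \<in> tuples n c" "m \<in> tuples n d" for s m
    unfolding W_def using integrable_lhv_response_prod[OF assms that] by simp
  have "(\<Sum>s\<in>tuples n c. \<pi> s * correlator n d (lhv_dist M P n) s (f s))
      = (\<Sum>s\<in>tuples n c. \<Sum>m\<in>tuples n d. \<integral>lam. W s m lam \<partial>M)"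
    by (simp add: W_def correlator_def lhv_dist_def sum_distrib_left mult_ac)
  also have "\<dots> = (\<integral>lam. (\<Sum>s\<in>tuples n c. \<Sum>m\<in>tuples n d. W s m lam) \<partial>M)"
    using integrable by (simp add: Bochner_Integration.integral_sum Bochner_Integration.integrable_sum)
  also have "\<dots> \<le> (\<integral>lam. pbar_lin n c d \<pi> f \<partial>M)"
  proof (rule integral_mono)
    show "integrable M (\<lambda>lam. \<Sum>s\<in>tuples n c. \<Sum>m\<in>tuples n d. W s m lam)"
      using integrable by (simp add: Bochner_Integration.integrable_sum)
    fix lam assume "lam \<in> space M"
    then show "(\<Sum>s\<in>tuples n c. \<Sum>m\<in>tuples n d. W s m lam) \<le> pbar_lin n c d \<pi> f"
      unfolding W_def using assms
      by (intro product_strategy_success_le_pbar_lin) (auto simp: lhv_model_def)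
  qed simp
  finally show ?thesis by (simp add: prob_space)
qed

lemma sum_kdelta_diff:
  assumes "x < d" and "(\<Sum>k<d. q k) = (1::real)"
  shows "(\<Sum>k\<in>{1..d-1}. (kdelta k x - kdelta 0 x) * q k) = q x - kdelta 0 x"
proof -
  have "{..<d} = insert 0 {1..d-1}"
    using assms(1) by auto
  then have rest: "(\<Sum>k\<in>{1..d-1}. q k) = 1 - q 0"
    using assms(2) by simp
  show ?thesis
  proof (cases "x = 0")
    case True
    then show ?thesis
      using rest by (simp add: kdelta_def sum_negf)
  next
    case False
    then have "(\<Sum>k\<in>{1..d-1}. (kdelta k x - kdelta 0 x) * q k) = (\<Sum>k\<in>{1..d-1}. if k = x then q k else 0)"
      by (intro sum.cong refl) (simp add: kdelta_def)
    then show ?thesis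
      using False assms(1) by (simp add: kdelta_def)
  qed
qed

lemma bell_lhs_eq_success:
  assumes "\<forall>s\<in>tuples n c. (\<Sum>k<d. q s k) = 1" and "\<forall>s\<in>tuples n c. f s < d"
  shows "bell_lhs n c d \<pi> f q
    = (\<Sum>s\<in>tuples n c. \<pi> s * q s (f s)) - (\<Sum>s\<in>tuples n c. \<pi> s * kdelta 0 (f s))"
proof -
  have "bell_lhs n c d \<pi> f q = (\<Sum>s\<in>tuples n c. \<pi> s * (q s (f s) - kdelta 0 (f s)))"
    unfolding bell_lhs_def
  proof (intro sum.cong refl)
    fix s assume "s \<in> tuples n c"
    then show "\<pi> s * (\<Sum>k\<in>{1..d-1}. (kdelta k (f s) - kdelta 0 (f s)) * q s k)
        = \<pi> s * (q s (f s) - kdelta 0 (f s))"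
      using assms sum_kdelta_diff[of "f s" d "q s"] by simp
  qed
  then show ?thesis
    by (simp add: right_diff_distrib sum_subtractf)
qed

lemma lhv_bell_inequality:
  assumes "lhv_model M P n c d" and "d > 0" and "\<forall>s\<in>tuples n c. f s < d"
  shows "bell_lhs n c d \<pi> f (correlator n d (lhv_dist M P n)) \<le> bell_rhs n c d \<pi> f"
proof -
  have "\<forall>s\<in>tuples n c. (\<Sum>k<d. correlator n d (lhv_dist M P n) s k) = 1"
    using assms(1,2) by (simp add: sum_correlator sum_lhv_dist)
  then show ?thesis
    using assms lhv_success_le_pbar_lin[OF assms(1)]
    by (simp add: bell_lhs_eq_success bell_rhs_def)
qed

lemma kdelta_corr_family:
  "\<forall>s\<in>tuples n c. f s < d \<Longrightarrow> (\<lambda>s k. kdelta k (f s)) \<in> corr_families n c d"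
  by (simp add: corr_families_def kdelta_def)

lemma bell_lhs_kdelta:
  assumes "\<forall>s\<in>tuples n c. f s < d" and "(\<Sum>s\<in>tuples n c. \<pi> s) = 1"
  shows "bell_lhs n c d \<pi> f (\<lambda>s k. kdelta k (f s)) = 1 - (\<Sum>s\<in>tuples n c. \<pi> s * kdelta 0 (f s))"
  using assms by (simp add: bell_lhs_eq_success kdelta_def)

lemma bell_lhs_le_on_corr_families:
  assumes "q \<in> corr_families n c d" and "\<forall>s\<in>tuples n c. f s < d"
    and "\<forall>s\<in>tuples n c. \<pi> s \<ge> 0" and "(\<Sum>s\<in>tuples n c. \<pi> s) = 1"
  shows "bell_lhs n c d \<pi> f q \<le> 1 - (\<Sum>s\<in>tuples n c. \<pi> s * kdelta 0 (f s))"
proof -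
  have normalized: "\<forall>s\<in>tuples n c. (\<Sum>k<d. q s k) = 1"
    using assms(1) by (simp add: corr_families_def)
  have "q s (f s) \<le> 1" if "s \<in> tuples n c" for s
    using assms(1,2) that member_le_sum[of "f s" "{..<d}" "q s"]
    by (simp add: corr_families_def)
  then have "(\<Sum>s\<in>tuples n c. \<pi> s * q s (f s)) \<le> (\<Sum>s\<in>tuples n c. \<pi> s)"
    using assms(3) by (intro sum_mono) (simp add: mult_left_le)
  then show ?thesis
    using assms by (simp add: bell_lhs_eq_success[OF normalized])
qed

theorem proposition3p3p1:
  fixes n c d :: nat and f :: "nat list \<Rightarrow> nat" and \<pi> :: "nat list \<Rightarrow> real"
  assumes "n \<ge> 1" and "c \<ge> 2" and "d \<ge> 2"
    and "\<forall>s\<in>tuples n c. f s < d"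
    and "\<not> npartite_linear n c d f"
    and "\<forall>s\<in>tuples n c. \<pi> s > 0"
    and "(\<Sum>s\<in>tuples n c. \<pi> s) = 1"
  shows "(\<forall>(M :: 'h measure) P. lhv_model M P n c d \<longrightarrow>
            bell_lhs n c d \<pi> f (correlator n d (lhv_dist M P n)) \<le> bell_rhs n c d \<pi> f)
       \<and> bell_rhs n c d \<pi> f < (SUP q\<in>corr_families n c d. bell_lhs n c d \<pi> f q)"
proof
  have "d > 0" using assms(3) by simp
  then show "\<forall>(M :: 'h measure) P. lhv_model M P n c d \<longrightarrow>
      bell_lhs n c d \<pi> f (correlator n d (lhv_dist M P n)) \<le> bell_rhs n c d \<pi> f"
    using lhv_bell_inequality assms(4) by blast
  have "bell_rhs n c d \<pi> f < 1 - (\<Sum>s\<in>tuples n c. \<pi> s * kdelta 0 (f s))"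
    using pbar_lin_less_1[OF \<open>d > 0\<close> assms(5-7)] by (simp add: bell_rhs_def)
  also have "\<dots> = bell_lhs n c d \<pi> f (\<lambda>s k. kdelta k (f s))"
    using bell_lhs_kdelta[OF assms(4,7)] by simp
  also have "\<dots> \<le> (SUP q\<in>corr_families n c d. bell_lhs n c d \<pi> f q)"
  proof (rule cSUP_upper)
    show "(\<lambda>s k. kdelta k (f s)) \<in> corr_families n c d"
      using assms(4) by (rule kdelta_corr_family)
    show "bdd_above (bell_lhs n c d \<pi> f ` corr_families n c d)"
      using bell_lhs_le_on_corr_families assms(4,6,7) less_imp_le
      by (intro bdd_aboveI2[of _ _ "1 - (\<Sum>s\<in>tuples n c. \<pi> s * kdelta 0 (f s))"]) blast
  qed
  finally show "bell_rhs n c d \<pi> f < (SUP q\<in>corr_families n c d. bell_lhs n c d \<pi> f q)" .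
qed

end
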